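(* Let $(F,d)$ be a $\sigma$-compact metric space whose Borel $\sigma$-algebra makes it a standard Borel space, and let $\mathcal{N}$ be a Radon measure on $F$. Let $R>0$ and let $p\in L^1_{\mathcal{N}}$ be continuous. Let $\hat y$ lie in the interior of $\mathrm{Supp}(\mathcal{N})$, and assume $y\mapsto\exp(-a\,d_R^2(y,\hat y))\in L^1_{\mathcal{N}}$ for every $a>0$. Then $$\int_F\frac{e^{-a\,d_R(y,\hat y)^2}}{\int_F e^{-a\,d(y',\hat y)^2}\,d\mathcal{N}(y')}\,p(y)\,d\mathcal{N}(y)\xrightarrow[a\to\infty]{}p(\hat y).$$
   Context: $d_R=\min(d,R)$. $\mathrm{Supp}(\mathcal{N})$ is the complement of the union of all $\mathcal{N}$-null open sets. *)

theory Defs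
  imports "HOL-Analysis.Analysis"
begin

definition standard_borel_space :: "'a measure \<Rightarrow> bool" where
  "standard_borel_space M \<longleftrightarrow>
     (\<exists>T :: 'a topology. topspace T = space M \<and> completely_metrizable_space T
        \<and> separable_space T \<and> sets M = sigma_sets (space M) {U. openin T U})"

definition sigma_compact_space :: "'a::topological_space itself \<Rightarrow> bool" where
  "sigma_compact_space _ \<longleftrightarrow>
     (\<exists>K :: nat \<Rightarrow> 'a set. (\<forall>n. compact (K n)) \<and> (\<Union>n. K n) = UNIV)"

definition radon_measure :: "'a::topological_space measure \<Rightarrow> bool" where
  "radon_measure N \<longleftrightarrow>
     sets N = sets borel
     \<and> (\<forall>x. \<exists>U. open U \<and> x \<in> U \<and> emeasure N U < \<infinity>)
     \<and> (\<forall>A\<in>sets borel. emeasure N A = (SUP K\<in>{K. compact K \<and> K \<subseteq> A}. emeasure N K))"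

definition measure_support :: "'a::topological_space measure \<Rightarrow> 'a set" where
  "measure_support N = - \<Union>{U. open U \<and> U \<in> sets N \<and> emeasure N U = 0}"

end

theory Submission
  imports Defs
begin

text \<open>Let \<open>Z a = \<integral> exp (- a d(y,yhat)\<^sup>2) dN(y)\<close> be the normaliser. On the ball of radius
  \<open>\<delta> \<le> R\<close> around \<open>yhat\<close> the truncation \<open>d\<^sub>R\<close> is inactive and \<open>|p - p yhat| \<le> \<epsilon>\<close>, so the
  numerator differs from \<open>p yhat \<cdot> Z a\<close> by at most \<open>\<epsilon> Z a\<close> plus a tail of size
  \<open>O(exp (- a \<delta>\<^sup>2))\<close>. Since \<open>yhat\<close> lies in the support, \<open>Z a \<ge> exp (- a \<eta>\<^sup>2) N(B(yhat,\<eta>))\<close>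
  with \<open>N(B(yhat,\<eta>)) > 0\<close>, so for \<open>\<eta> < \<delta>\<close> the relative tail vanishes as \<open>a \<rightarrow> \<infinity>\<close>.
  Integrability of \<open>exp (- d\<^sub>R\<^sup>2) \<ge> exp (- R\<^sup>2)\<close> forces \<open>N\<close> to be finite.\<close>

lemma finite_measure_of_integrable_bounded_below:
  fixes f :: "'a \<Rightarrow> real"
  assumes f: "integrable M f" and c: "c > 0" and bound: "\<And>x. x \<in> space M \<Longrightarrow> c \<le> f x"
  shows "finite_measure M"
proof
  have "ennreal c * emeasure M (space M) = (\<integral>\<^sup>+ x. ennreal c \<partial>M)"
    by simp
  also have "\<dots> \<le> (\<integral>\<^sup>+ x. ennreal (f x) \<partial>M)"
    using bound by (intro nn_integral_mono ennreal_leI)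
  also have "\<dots> < \<infinity>"
    using integrableD(2)[OF f] by (simp add: less_top)
  finally show "emeasure M (space M) \<noteq> \<infinity>"
    using c by (auto simp: ennreal_mult_less_top)
qed

lemma emeasure_open_neq_0_if_in_support:
  assumes "x \<in> measure_support N" "open U" "U \<in> sets N" "x \<in> U"
  shows "emeasure N U \<noteq> 0"
  using assms unfolding measure_support_def by blast

lemma borel_measurable_continuous_on_UNIV:
  assumes "sets N = sets borel" "continuous_on UNIV f"
  shows "f \<in> borel_measurable N"
  using borel_measurable_continuous_onI[OF assms(2)] measurable_cong_sets[OF assms(1) refl]
  by blast

lemma integrable_continuous_bounded:
  fixes f :: "'a::topological_space \<Rightarrow> real"
  assumes "finite_measure M" "sets M = sets borel" "continuous_on UNIV f" "\<And>x. \<bar>f x\<bar> \<le> B"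
  shows "integrable M f"
proof -
  interpret finite_measure M by fact
  show ?thesis
    using assms
    by (intro integrable_const_bound[where B = B] AE_I2 borel_measurable_continuous_on_UNIV) auto
qed

lemma truncated_gauss_diff_bound:
  fixes a d R \<delta> \<epsilon> u v :: real
  assumes a: "a \<ge> 0" and \<delta>: "0 \<le> \<delta>" "\<delta> \<le> R" and \<epsilon>: "\<epsilon> \<ge> 0"
    and near: "d < \<delta> \<Longrightarrow> \<bar>u - v\<bar> \<le> \<epsilon>"
  shows "\<bar>exp (- a * (min d R)\<^sup>2) * u - exp (- a * d\<^sup>2) * v\<bar>
           \<le> \<epsilon> * exp (- a * d\<^sup>2) + exp (- a * \<delta>\<^sup>2) * (\<bar>u\<bar> + \<bar>v\<bar>)"
proof (cases "d < \<delta>")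
  case True
  then have "min d R = d" using \<delta> by simp
  then have "\<bar>exp (- a * (min d R)\<^sup>2) * u - exp (- a * d\<^sup>2) * v\<bar> = exp (- a * d\<^sup>2) * \<bar>u - v\<bar>"
    by (simp add: right_diff_distrib[symmetric] abs_mult)
  also have "\<dots> \<le> \<epsilon> * exp (- a * d\<^sup>2)"
    using near[OF True] by simp
  finally show ?thesis
    by (smt (verit) exp_gt_zero abs_ge_zero mult_nonneg_nonneg)
next
  case False
  then have "\<delta>\<^sup>2 \<le> (min d R)\<^sup>2" "\<delta>\<^sup>2 \<le> d\<^sup>2"
    using \<delta> by (auto intro!: power_mono)
  then have trunc: "exp (- a * (min d R)\<^sup>2) \<le> exp (- a * \<delta>\<^sup>2)"
    and full: "exp (- a * d\<^sup>2) \<le> exp (- a * \<delta>\<^sup>2)"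
    using a by (auto intro!: mult_left_mono)
  have "\<bar>exp (- a * (min d R)\<^sup>2) * u - exp (- a * d\<^sup>2) * v\<bar>
          \<le> exp (- a * (min d R)\<^sup>2) * \<bar>u\<bar> + exp (- a * d\<^sup>2) * \<bar>v\<bar>"
    by (rule order_trans[OF abs_triangle_ineq4]) (simp add: abs_mult)
  also have "\<dots> \<le> exp (- a * \<delta>\<^sup>2) * (\<bar>u\<bar> + \<bar>v\<bar>)"
    using trunc full by (simp add: distrib_left add_mono mult_right_mono)
  finally show ?thesis
    using \<epsilon> by (smt (verit) exp_gt_zero mult_nonneg_nonneg)
qed

lemma gauss_integral_ge_ball:
  fixes c :: "'a::metric_space"
  assumes fin: "finite_measure M" and sets: "sets M = sets borel" and a: "a \<ge> 0"
  shows "exp (- a * \<eta>\<^sup>2) * measure M (ball c \<eta>) \<le> (\<integral>y. exp (- a * (dist y c)\<^sup>2) \<partial>M)"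
proof -
  interpret finite_measure M by (rule fin)
  have "space M = UNIV"
    using sets_eq_imp_space_eq[OF sets] by simp
  then have "exp (- a * \<eta>\<^sup>2) * measure M (ball c \<eta>)
               = (\<integral>y. exp (- a * \<eta>\<^sup>2) * indicator (ball c \<eta>) y \<partial>M)"
    by simp
  also have "\<dots> \<le> (\<integral>y. exp (- a * (dist y c)\<^sup>2) \<partial>M)"
  proof (rule integral_mono)
    show "integrable M (\<lambda>y. exp (- a * \<eta>\<^sup>2) * indicator (ball c \<eta>) y)"
      using sets by (intro integrable_mult_right integrable_real_indicator) (auto simp: less_top[symmetric])
    show "integrable M (\<lambda>y. exp (- a * (dist y c)\<^sup>2))"
      using fin sets a by (intro integrable_continuous_bounded[where B = 1] continuous_intros) auto
    fix y
    have "(dist y c)\<^sup>2 \<le> \<eta>\<^sup>2" if "y \<in> ball c \<eta>"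
      using that by (intro power_mono) (auto simp: dist_commute)
    then show "exp (- a * \<eta>\<^sup>2) * indicator (ball c \<eta>) y \<le> exp (- a * (dist y c)\<^sup>2)"
      using a by (auto simp: indicator_def intro: mult_left_mono)
  qed
  finally show ?thesis .
qed

lemma truncated_gauss_integral_error:
  fixes c :: "'a::metric_space" and p :: "'a \<Rightarrow> real"
  assumes fin: "finite_measure M" and sets: "sets M = sets borel" and p: "integrable M p"
    and a: "a \<ge> 0" and \<delta>: "0 \<le> \<delta>" "\<delta> \<le> R" and \<epsilon>: "\<epsilon> \<ge> 0"
    and near: "\<And>y. dist y c < \<delta> \<Longrightarrow> \<bar>p y - p c\<bar> \<le> \<epsilon>"
  defines "Z \<equiv> \<integral>y. exp (- a * (dist y c)\<^sup>2) \<partial>M"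
  shows "\<bar>(\<integral>y. exp (- a * (min (dist y c) R)\<^sup>2) * p y \<partial>M) - p c * Z\<bar>
           \<le> \<epsilon> * Z + exp (- a * \<delta>\<^sup>2) * ((\<integral>y. \<bar>p y\<bar> \<partial>M) + \<bar>p c\<bar> * measure M (space M))"
proof -
  interpret finite_measure M by (rule fin)
  define E1 where "E1 y = exp (- a * (min (dist y c) R)\<^sup>2)" for y
  define E2 where "E2 y = exp (- a * (dist y c)\<^sup>2)" for y
  have E1: "integrable M (\<lambda>y. E1 y * p y)"
  proof (rule Bochner_Integration.integrable_bound[OF p])
    have "E1 \<in> borel_measurable M"
      unfolding E1_def using sets by (intro borel_measurable_continuous_on_UNIV continuous_intros)
    then show "(\<lambda>y. E1 y * p y) \<in> borel_measurable M"
      using p by measurable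
    show "AE y in M. norm (E1 y * p y) \<le> norm (p y)"
      using a by (intro AE_I2) (auto simp: E1_def abs_mult intro!: mult_left_le_one_le)
  qed
  have E2: "integrable M E2"
    unfolding E2_def using fin sets a
    by (intro integrable_continuous_bounded[where B = 1] continuous_intros) auto
  have Z: "Z = integral\<^sup>L M E2"
    unfolding Z_def E2_def[abs_def] ..
  have "\<bar>(\<integral>y. E1 y * p y \<partial>M) - p c * Z\<bar> = \<bar>\<integral>y. E1 y * p y - E2 y * p c \<partial>M\<bar>"
    using E1 E2 by (simp add: Z mult.commute)
  also have "\<dots> \<le> (\<integral>y. \<bar>E1 y * p y - E2 y * p c\<bar> \<partial>M)"
    using integral_norm_bound[of M "\<lambda>y. E1 y * p y - E2 y * p c"] by simp
  also have "\<dots> \<le> (\<integral>y. \<epsilon> * E2 y + exp (- a * \<delta>\<^sup>2) * (\<bar>p y\<bar> + \<bar>p c\<bar>) \<partial>M)"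
    using E1 E2 p a \<delta> \<epsilon> near unfolding E1_def E2_def
    by (intro integral_mono truncated_gauss_diff_bound) auto
  also have "\<dots> = \<epsilon> * Z + exp (- a * \<delta>\<^sup>2) * ((\<integral>y. \<bar>p y\<bar> \<partial>M) + \<bar>p c\<bar> * measure M (space M))"
    using E2 p by (simp add: Z algebra_simps)
  finally show ?thesis
    by (simp add: E1_def)
qed

lemma truncated_gauss_average_tendsto:
  fixes N :: "'a::metric_space measure" and p :: "'a \<Rightarrow> real"
  assumes fin: "finite_measure N" and sets: "sets N = sets borel"
    and p: "integrable N p" and cont: "isCont p c"
    and supp: "c \<in> measure_support N" and R: "R > 0"
  shows "((\<lambda>a. \<integral>y. exp (- a * (min (dist y c) R)\<^sup>2)
                  / (\<integral>y'. exp (- a * (dist y' c)\<^sup>2) \<partial>N) * p y \<partial>N) \<longlongrightarrow> p c) at_top"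
proof (rule tendstoI)
  interpret finite_measure N by (rule fin)
  fix e :: real
  assume "e > 0"
  define \<epsilon> where "\<epsilon> = e / 2"
  have \<epsilon>: "\<epsilon> > 0"
    using \<open>e > 0\<close> by (simp add: \<epsilon>_def)
  obtain \<delta>\<^sub>0 where "\<delta>\<^sub>0 > 0" and near\<^sub>0: "\<And>y. dist y c < \<delta>\<^sub>0 \<Longrightarrow> \<bar>p y - p c\<bar> \<le> \<epsilon>"
    using cont \<epsilon> unfolding continuous_at_eps_delta dist_real_def by (meson less_imp_le)
  define \<delta> where "\<delta> = min \<delta>\<^sub>0 R"
  define \<eta> where "\<eta> = \<delta> / 2"
  have \<delta>: "0 < \<delta>" "\<delta> \<le> R" and \<eta>: "0 < \<eta>" "\<eta> < \<delta>"
    using \<open>\<delta>\<^sub>0 > 0\<close> R by (auto simp: \<delta>_def \<eta>_def)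
  have near: "\<And>y. dist y c < \<delta> \<Longrightarrow> \<bar>p y - p c\<bar> \<le> \<epsilon>"
    using near\<^sub>0 by (simp add: \<delta>_def)
  define m where "m = measure N (ball c \<eta>)"
  have "emeasure N (ball c \<eta>) \<noteq> 0"
    using supp sets \<eta> by (intro emeasure_open_neq_0_if_in_support) auto
  then have m: "m > 0"
    by (simp add: m_def emeasure_eq_measure zero_less_measure_iff)
  define C where "C = (\<integral>y. \<bar>p y\<bar> \<partial>N) + \<bar>p c\<bar> * measure N (space N)"
  define k where "k = \<delta>\<^sup>2 - \<eta>\<^sup>2"
  have k: "k > 0"
    using \<eta> by (simp add: k_def power_strict_mono)
  have "((\<lambda>a. C / m * exp (- (k * a))) \<longlongrightarrow> 0) at_top"
    using k by real_asymp
  then have tail: "eventually (\<lambda>a. C / m * exp (- (k * a)) < \<epsilon>) at_top"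
    using \<epsilon> by (rule order_tendstoD)
  show "eventually (\<lambda>a. dist (\<integral>y. exp (- a * (min (dist y c) R)\<^sup>2)
                  / (\<integral>y'. exp (- a * (dist y' c)\<^sup>2) \<partial>N) * p y \<partial>N) (p c) < e) at_top"
    using tail eventually_gt_at_top[of 0]
  proof eventually_elim
    case (elim a)
    define Z where "Z = (\<integral>y. exp (- a * (dist y c)\<^sup>2) \<partial>N)"
    have Z: "exp (- a * \<eta>\<^sup>2) * m \<le> Z"
      unfolding Z_def m_def using fin sets elim by (intro gauss_integral_ge_ball) auto
    then have "Z > 0"
      using m by (smt (verit) exp_gt_zero mult_pos_pos)
    have err: "\<bar>(\<integral>y. exp (- a * (min (dist y c) R)\<^sup>2) * p y \<partial>N) - p c * Z\<bar>
                 \<le> \<epsilon> * Z + exp (- a * \<delta>\<^sup>2) * C"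
      unfolding Z_def C_def using fin sets p elim \<delta> \<epsilon> near
      by (intro truncated_gauss_integral_error) auto
    have "exp (- a * \<delta>\<^sup>2) = exp (- (k * a)) * exp (- a * \<eta>\<^sup>2)"
      by (simp add: k_def exp_add[symmetric] algebra_simps)
    then have decay: "exp (- a * \<delta>\<^sup>2) * C / (exp (- a * \<eta>\<^sup>2) * m) = C / m * exp (- (k * a))"
      using m by (simp add: field_simps)
    have "(\<integral>y. exp (- a * (min (dist y c) R)\<^sup>2) / Z * p y \<partial>N)
            = (\<integral>y. exp (- a * (min (dist y c) R)\<^sup>2) * p y \<partial>N) / Z"
      by simp
    then have "dist (\<integral>y. exp (- a * (min (dist y c) R)\<^sup>2) / Z * p y \<partial>N) (p c)
            = \<bar>(\<integral>y. exp (- a * (min (dist y c) R)\<^sup>2) * p y \<partial>N) - p c * Z\<bar> / Z"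
      using \<open>Z > 0\<close> by (simp add: dist_real_def field_simps)
    also have "\<dots> \<le> \<epsilon> + exp (- a * \<delta>\<^sup>2) * C / Z"
      using err \<open>Z > 0\<close> by (simp add: field_simps)
    also have "\<dots> \<le> \<epsilon> + exp (- a * \<delta>\<^sup>2) * C / (exp (- a * \<eta>\<^sup>2) * m)"
      using Z m \<open>Z > 0\<close> C_def by (intro add_left_mono divide_left_mono mult_nonneg_nonneg) auto
    also have "\<dots> = \<epsilon> + C / m * exp (- (k * a))"
      by (simp only: decay)
    also have "\<dots> < e"
      using elim(1) unfolding \<epsilon>_def by linarith
    finally show ?case
      by (simp add: Z_def)
  qed
qed

theorem lemmaB2:
  fixes N :: "'a::metric_space measure"
    and p :: "'a \<Rightarrow> real"
    and R :: real
    and yhat :: 'a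
  assumes sigma_compact: "sigma_compact_space TYPE('a)"
    and std_borel: "standard_borel_space (borel :: 'a measure)"
    and radon: "radon_measure N"
    and R_pos: "R > 0"
    and p_int: "integrable N p"
    and p_cont: "continuous_on UNIV p"
    and yhat_int: "yhat \<in> interior (measure_support N)"
    and gauss_int: "\<And>a. a > 0 \<Longrightarrow>
          integrable N (\<lambda>y. exp (- a * (min (dist y yhat) R)\<^sup>2))"
  shows "((\<lambda>a. \<integral>y. exp (- a * (min (dist y yhat) R)\<^sup>2)
                  / (\<integral>y'. exp (- a * (dist y' yhat)\<^sup>2) \<partial>N) * p y \<partial>N)
          \<longlongrightarrow> p yhat) at_top"
proof (rule truncated_gauss_average_tendsto)
  show sets: "sets N = sets borel"
    using radon by (simp add: radon_measure_def)
  have "exp (- R\<^sup>2) \<le> exp (- 1 * (min (dist y yhat) R)\<^sup>2)" for y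
    using R_pos by (simp add: power_mono)
  then show "finite_measure N"
    using gauss_int[of 1] by (intro finite_measure_of_integrable_bounded_below[where c = "exp (- R\<^sup>2)"]) auto
  show "isCont p yhat"
    using p_cont by (simp add: continuous_on_eq_continuous_at)
  show "yhat \<in> measure_support N"
    using yhat_int interior_subset by blast
qed (use p_int R_pos in auto)

end
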